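(* Let $G$ be a finite simple graph on $n$ vertices having $t\geq 2$ cut vertices. Then $\mathrm{nRel}(G;p)$ has at least one fixed point in $(0,1)$, i.e. there exists $p\in(0,1)$ with $\mathrm{nRel}(G;p)=p$.
   Context: For a graph $G$ on $n$ vertices, a connected set is a nonempty vertex subset $C$ such that the induced subgraph $G[C]$ is connected. The node reliability of $G$ is the polynomial \[ \mathrm{nRel}(G;p)=\sum_{C}p^{|C|}(1-p)^{n-|C|}, \] the sum over all connected sets $C$ of $G$. *)

theory Defs
  imports Complex_Main
begin

definition simple_graph :: "'a set \<Rightarrow> ('a \<Rightarrow> 'a \<Rightarrow> bool) \<Rightarrow> bool" where
  "simple_graph V E \<longleftrightarrow> finite V \<and> (\<forall>u v. E u v \<longrightarrow> E v u)
     \<and> (\<forall>v. \<not> E v v) \<and> (\<forall>u v. E u v \<longrightarrow> u \<in> V \<and> v \<in> V)"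

definition reach_in :: "('a \<Rightarrow> 'a \<Rightarrow> bool) \<Rightarrow> 'a set \<Rightarrow> 'a \<Rightarrow> 'a \<Rightarrow> bool" where
  "reach_in E S = (\<lambda>x y. x \<in> S \<and> y \<in> S \<and> E x y)\<^sup>*\<^sup>*"

definition connected_set :: "('a \<Rightarrow> 'a \<Rightarrow> bool) \<Rightarrow> 'a set \<Rightarrow> bool" where
  "connected_set E C \<longleftrightarrow> C \<noteq> {} \<and> (\<forall>u\<in>C. \<forall>v\<in>C. reach_in E C u v)"

definition num_components :: "('a \<Rightarrow> 'a \<Rightarrow> bool) \<Rightarrow> 'a set \<Rightarrow> nat" where
  "num_components E S = card ((\<lambda>v. {u \<in> S. reach_in E S v u}) ` S)"

definition cut_vertex :: "'a set \<Rightarrow> ('a \<Rightarrow> 'a \<Rightarrow> bool) \<Rightarrow> 'a \<Rightarrow> bool" where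
  "cut_vertex V E v \<longleftrightarrow> v \<in> V \<and> num_components E (V - {v}) > num_components E V"

definition nRel :: "'a set \<Rightarrow> ('a \<Rightarrow> 'a \<Rightarrow> bool) \<Rightarrow> real \<Rightarrow> real" where
  "nRel V E p = (\<Sum>C\<in>{C. C \<subseteq> V \<and> connected_set E C}.
                   p ^ card C * (1 - p) ^ (card V - card C))"

end

theory Submission
  imports Defs
begin

text \<open>Read \<open>nRel V E p\<close> as the probability that the vertices surviving independently with
probability \<open>p\<close> form a connected set. The \<open>n\<close> singletons give
\<open>nRel p \<ge> n p (1 - p)^(n-1)\<close>; the \<open>t\<close> sets \<open>V - {v}\<close> for cut vertices \<open>v\<close> are disconnected,
so \<open>nRel p \<le> 1 - t p^(n-1) (1 - p)\<close>. With \<open>q = 1/(2n)\<close> Bernoulli's inequality gives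
\<open>(1 - q)^(n-1) \<ge> 1/2\<close>, hence \<open>nRel q \<ge> q\<close> (as \<open>n \<ge> 2\<close>) and \<open>nRel (1 - q) \<le> 1 - q\<close>
(as \<open>t \<ge> 2\<close>); the intermediate value theorem yields the fixed point.\<close>

lemma sum_Pow_Bernoulli_weights:
  fixes p :: real
  assumes "finite V"
  shows "(\<Sum>S\<in>Pow V. p ^ card S * (1 - p) ^ (card V - card S)) = 1"
proof -
  have "1 = (\<Prod>x\<in>V. p + (1 - p))" by simp
  also have "\<dots> = (\<Sum>S\<in>Pow V. (\<Prod>x\<in>S. p) * (\<Prod>x\<in>V - S. 1 - p))"
    by (rule prod_add[OF assms])
  also have "\<dots> = (\<Sum>S\<in>Pow V. p ^ card S * (1 - p) ^ (card V - card S))"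
    using assms by (intro sum.cong) (auto simp: card_Diff_subset finite_subset)
  finally show ?thesis by simp
qed

lemma connected_set_singleton: "connected_set E {v}"
  unfolding connected_set_def reach_in_def by simp

lemma num_components_connected_set:
  assumes "connected_set E S"
  shows "num_components E S = 1"
proof -
  have "(\<lambda>v. {u \<in> S. reach_in E S v u}) ` S = {S}"
    using assms unfolding connected_set_def by (auto simp: reach_in_def)
  then show ?thesis unfolding num_components_def by simp
qed

lemma not_connected_set_remove_cut_vertex:
  assumes "finite V" "cut_vertex V E v"
  shows "\<not> connected_set E (V - {v})"
proof
  assume "connected_set E (V - {v})"
  then have "num_components E (V - {v}) = 1" by (rule num_components_connected_set)
  moreover have "num_components E V \<ge> 1"
    using assms unfolding cut_vertex_def num_components_def
    by (auto simp: Suc_le_eq card_gt_0_iff)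
  ultimately show False using assms(2) unfolding cut_vertex_def by simp
qed

lemma nRel_ge_singletons:
  fixes p :: real
  assumes "finite V" "0 \<le> p" "p \<le> 1"
  shows "card V * p * (1 - p) ^ (card V - 1) \<le> nRel V E p"
proof -
  let ?w = "\<lambda>C. p ^ card C * (1 - p) ^ (card V - card C)"
  have "card V * p * (1 - p) ^ (card V - 1) = (\<Sum>v\<in>V. ?w {v})" by simp
  also have "\<dots> = sum ?w ((\<lambda>v. {v}) ` V)"
    by (simp add: sum.reindex inj_on_def)
  also have "\<dots> \<le> sum ?w {C. C \<subseteq> V \<and> connected_set E C}"
    using assms connected_set_singleton
    by (intro sum_mono2) (auto intro: finite_subset[of _ "Pow V"])
  finally show ?thesis unfolding nRel_def .
qed

lemma nRel_le_cut_vertices: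
  fixes p :: real
  assumes "finite V" "0 \<le> p" "p \<le> 1"
  shows "nRel V E p \<le> 1 - card {v \<in> V. cut_vertex V E v} * p ^ (card V - 1) * (1 - p)"
proof -
  let ?w = "\<lambda>C. p ^ card C * (1 - p) ^ (card V - card C)"
  let ?T = "{v \<in> V. cut_vertex V E v}"
  let ?A = "{C. C \<subseteq> V \<and> connected_set E C}"
  have "(\<Sum>v\<in>?T. p ^ (card V - 1) * (1 - p)) = (\<Sum>v\<in>?T. ?w (V - {v}))"
  proof (rule sum.cong)
    fix v assume "v \<in> ?T"
    then have "v \<in> V" "card V > 0" using assms(1) card_gt_0_iff by auto
    then show "p ^ (card V - 1) * (1 - p) = ?w (V - {v})" using assms(1) by simp
  qed simp
  then have "card ?T * p ^ (card V - 1) * (1 - p) = (\<Sum>v\<in>?T. ?w (V - {v}))"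
    by simp
  also have "\<dots> = sum ?w ((\<lambda>v. V - {v}) ` ?T)"
    by (subst sum.reindex) (auto simp: inj_on_def)
  also have "\<dots> \<le> sum ?w (Pow V - ?A)"
    using assms not_connected_set_remove_cut_vertex[OF assms(1)] by (intro sum_mono2) auto
  also have "\<dots> = sum ?w (Pow V) - sum ?w ?A"
    using assms(1) by (intro sum_diff) auto
  also have "\<dots> = 1 - nRel V E p"
    unfolding nRel_def using sum_Pow_Bernoulli_weights[OF assms(1)] by simp
  finally show ?thesis by simp
qed

lemma Bernoulli_half_inverse:
  assumes "n \<ge> 1"
  shows "(1 - 1 / (2 * real n)) ^ (n - 1) \<ge> 1 / 2"
proof -
  have "1 - real (n - 1) / (2 * real n) \<le> (1 - 1 / (2 * real n)) ^ (n - 1)"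
    using Bernoulli_inequality[of "- 1 / (2 * real n)" "n - 1"] assms by simp
  moreover have "real (n - 1) / (2 * real n) \<le> 1 / 2"
    using assms by (simp add: field_simps)
  ultimately show ?thesis by linarith
qed

lemma continuous_on_nRel: "continuous_on S (nRel V E)"
  unfolding nRel_def by (intro continuous_intros)

theorem corollary4p2:
  fixes V :: "'a set" and E :: "'a \<Rightarrow> 'a \<Rightarrow> bool"
  assumes "simple_graph V E"
    and "card {v \<in> V. cut_vertex V E v} \<ge> 2"
  shows "\<exists>p::real. 0 < p \<and> p < 1 \<and> nRel V E p = p"
proof -
  define n where "n = card V"
  define t where "t = card {v \<in> V. cut_vertex V E v}"
  define q :: real where "q = 1 / (2 * real n)"
  have fin: "finite V" using assms(1) unfolding simple_graph_def by simp
  have "2 \<le> t" "t \<le> n"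
    using assms(2) card_mono[OF fin] unfolding t_def n_def by auto
  then have q: "0 < q" "q \<le> 1 - q" and half: "1 / 2 \<le> (1 - q) ^ (n - 1)"
    using Bernoulli_half_inverse[of n] unfolding q_def by (auto simp: field_simps)
  have "2 * (1 / 2) \<le> real n * (1 - q) ^ (n - 1)"
    using mult_mono[OF _ half, of 2 "real n"] \<open>2 \<le> t\<close> \<open>t \<le> n\<close> by simp
  then have "q \<le> real n * q * (1 - q) ^ (n - 1)"
    using mult_left_mono[of 1 _ q] q by (simp add: mult.left_commute)
  also have "\<dots> \<le> nRel V E q"
    using nRel_ge_singletons[OF fin] q unfolding n_def by simp
  finally have lo: "0 \<le> nRel V E q - q" by simp
  have "2 * (1 / 2) \<le> real t * (1 - q) ^ (n - 1)"
    using mult_mono[OF _ half, of 2 "real t"] \<open>2 \<le> t\<close> by simp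
  then have "q \<le> real t * (1 - q) ^ (n - 1) * q"
    using mult_right_mono[of 1 _ q] q by simp
  moreover have "nRel V E (1 - q) \<le> 1 - real t * (1 - q) ^ (n - 1) * q"
    using nRel_le_cut_vertices[OF fin, of "1 - q" E] q unfolding t_def n_def by simp
  ultimately have hi: "nRel V E (1 - q) - (1 - q) \<le> 0" by simp
  have "continuous_on {q..1 - q} (\<lambda>p. nRel V E p - p)"
    by (intro continuous_intros continuous_on_nRel)
  then obtain p where "q \<le> p" "p \<le> 1 - q" "nRel V E p - p = 0"
    using IVT2'[OF hi lo q(2)] by blast
  then show ?thesis using q by (intro exI[of _ p]) auto
qed

end
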